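(* Consider two settings $(a,c,P,\phi)$ and $(a',c',P',\phi)$ as described in the context. Suppose $a\ge a'$, $c\le c'$, and either $\widetilde P\ge_{FOSD}\widetilde{P'}$ (for the degree marginals) or the degree marginal of $P$ is a mean-preserving spread of that of $P'$, with at least one of these relations strict. Then for every $\theta_i\in\Theta$ and all $d_i>d_i'$ in $D$, $$x^{friend}_{a,c,P}(\theta_i,d_i)-x^{friend}_{a,c,P}(\theta_i,d_i')>x^{friend}_{a',c',P'}(\theta_i,d_i)-x^{friend}_{a',c',P'}(\theta_i,d_i')$$ and $$U^{friend}_{a,c,P}(\theta_i,d_i)-U^{friend}_{a,c,P}(\theta_i,d_i')>U^{friend}_{a',c',P'}(\theta_i,d_i)-U^{friend}_{a',c',P'}(\theta_i,d_i').$$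
   Context: Fix an integer $n\ge2$, $\phi\in\mathbb{R}$, a compact set $\Theta\subset[0,\infty)$ of types, and $D=\{1,\dots,n-1\}$. A setting $(a,c,P,\phi)$ consists of $a>0$, $c>0$ and a probability distribution $P$ on $\Theta\times D$ (joint type/degree distribution of a generic potential neighbor); $\mathrm{E}_P$ is expectation under $P$, and the neighbor distribution $\widetilde P$ is given by $\widetilde{\mathrm{E}}_P[h(\theta,d)]=\mathrm{E}_P[d\,h(\theta,d)]/\mathrm{E}_P[d]$. In each of the two settings assume $c>a\,\widetilde{\mathrm{E}}_P[d]$ and $\widetilde{\mathrm{E}}_P[\theta]=\mathrm{E}_P[\theta]$; the type marginals of $P$ and $P'$ coincide and put positive probability on $\theta>0$. A strategy is a bounded measurable $x:\Theta\times D\to[0,\infty)$, used by all agents; in the friend game of a setting, an agent of type $\theta_i$ and degree $d_i$ choosing $y\ge0$ when others use $x$ gets $EU^{friend}(y;\theta_i,d_i;x)=\theta_i y+a\,y\,d_i\widetilde{\mathrm{E}}_P[x(\theta,d)]-\frac{c}{2}y^2+\phi(n-1)\mathrm{E}_P[x(\theta,d)]$. A Bayesian equilibrium is a strategy $x$ such that for every $(\theta_i,d_i)$, $x(\theta_i,d_i)$ maximizes this payoff over $y\ge0$ given others use $x$; it exists and is unique, and is denoted $x^{friend}_{a,c,P}$. Let $U^{friend}_{a,c,P}(\theta_i,d_i)=EU^{friend}(x^{friend}_{a,c,P}(\theta_i,d_i);\theta_i,d_i;x^{friend}_{a,c,P})$. $\ge_{FOSD}$ denotes first-order stochastic dominance.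 *)

theory Defs
  imports "HOL-Analysis.Analysis" "HOL-Probability.Probability"
begin

definition Dset :: "nat \<Rightarrow> nat set" where
  "Dset n = {1..n-1}"

text \<open>Expectation under P (P is a measure on type x degree).\<close>
definition Ex :: "(real \<times> nat) measure \<Rightarrow> (real \<Rightarrow> nat \<Rightarrow> real) \<Rightarrow> real" where
  "Ex P h = (\<integral>z. h (fst z) (snd z) \<partial>P)"

text \<open>Expectation under the neighbor distribution P-tilde.\<close>
definition Ex_nb :: "(real \<times> nat) measure \<Rightarrow> (real \<Rightarrow> nat \<Rightarrow> real) \<Rightarrow> real" where
  "Ex_nb P h = Ex P (\<lambda>\<theta> d. real d * h \<theta> d) / Ex P (\<lambda>\<theta> d. real d)"

definition setting :: "nat \<Rightarrow> real set \<Rightarrow> real \<Rightarrow> real \<Rightarrow> (real \<times> nat) measure \<Rightarrow> bool" where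
  "setting n \<Theta> a c P \<longleftrightarrow>
     a > 0 \<and> c > 0 \<and> prob_space P \<and>
     sets P = sets (borel \<Otimes>\<^sub>M count_space UNIV) \<and>
     measure P (\<Theta> \<times> Dset n) = 1 \<and>
     c > a * Ex_nb P (\<lambda>\<theta> d. real d) \<and>
     Ex_nb P (\<lambda>\<theta> d. \<theta>) = Ex P (\<lambda>\<theta> d. \<theta>)"

text \<open>Strategies: bounded measurable nonnegative functions on Theta x D
  (normalised to 0 outside Theta x D, since HOL functions are total).\<close>
definition strategy :: "nat \<Rightarrow> real set \<Rightarrow> (real \<times> nat) measure \<Rightarrow> (real \<Rightarrow> nat \<Rightarrow> real) \<Rightarrow> bool" where
  "strategy n \<Theta> P x \<longleftrightarrow>
     (\<lambda>z. x (fst z) (snd z)) \<in> borel_measurable P \<and>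
     (\<exists>B. \<forall>\<theta>\<in>\<Theta>. \<forall>d\<in>Dset n. x \<theta> d \<le> B) \<and>
     (\<forall>\<theta>\<in>\<Theta>. \<forall>d\<in>Dset n. 0 \<le> x \<theta> d) \<and>
     (\<forall>\<theta> d. (\<theta>, d) \<notin> \<Theta> \<times> Dset n \<longrightarrow> x \<theta> d = 0)"

definition EU_friend :: "nat \<Rightarrow> real \<Rightarrow> real \<Rightarrow> real \<Rightarrow> (real \<times> nat) measure \<Rightarrow>
    real \<Rightarrow> real \<Rightarrow> nat \<Rightarrow> (real \<Rightarrow> nat \<Rightarrow> real) \<Rightarrow> real" where
  "EU_friend n \<phi> a c P y \<theta>i di x =
     \<theta>i * y + a * y * real di * Ex_nb P x - c / 2 * y ^ 2 + \<phi> * (real n - 1) * Ex P x"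

definition is_friend_eq :: "nat \<Rightarrow> real set \<Rightarrow> real \<Rightarrow> real \<Rightarrow> real \<Rightarrow> (real \<times> nat) measure \<Rightarrow>
    (real \<Rightarrow> nat \<Rightarrow> real) \<Rightarrow> bool" where
  "is_friend_eq n \<Theta> \<phi> a c P x \<longleftrightarrow> strategy n \<Theta> P x \<and>
     (\<forall>\<theta>i\<in>\<Theta>. \<forall>di\<in>Dset n. \<forall>y\<ge>0.
        EU_friend n \<phi> a c P y \<theta>i di x \<le> EU_friend n \<phi> a c P (x \<theta>i di) \<theta>i di x)"

definition x_friend :: "nat \<Rightarrow> real set \<Rightarrow> real \<Rightarrow> real \<Rightarrow> real \<Rightarrow> (real \<times> nat) measure \<Rightarrow>
    real \<Rightarrow> nat \<Rightarrow> real" where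
  "x_friend n \<Theta> \<phi> a c P = (THE x. is_friend_eq n \<Theta> \<phi> a c P x)"

definition U_friend :: "nat \<Rightarrow> real set \<Rightarrow> real \<Rightarrow> real \<Rightarrow> real \<Rightarrow> (real \<times> nat) measure \<Rightarrow>
    real \<Rightarrow> nat \<Rightarrow> real" where
  "U_friend n \<Theta> \<phi> a c P \<theta>i di =
     EU_friend n \<phi> a c P (x_friend n \<Theta> \<phi> a c P \<theta>i di) \<theta>i di (x_friend n \<Theta> \<phi> a c P)"

definition fosd_nb :: "(real \<times> nat) measure \<Rightarrow> (real \<times> nat) measure \<Rightarrow> bool" where
  "fosd_nb P P' \<longleftrightarrow> (\<forall>k. Ex_nb P (\<lambda>\<theta> d. if k \<le> d then 1 else 0)
                        \<ge> Ex_nb P' (\<lambda>\<theta> d. if k \<le> d then 1 else 0))"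

definition strict_fosd_nb :: "(real \<times> nat) measure \<Rightarrow> (real \<times> nat) measure \<Rightarrow> bool" where
  "strict_fosd_nb P P' \<longleftrightarrow> fosd_nb P P' \<and>
     (\<exists>k. Ex_nb P (\<lambda>\<theta> d. if k \<le> d then 1 else 0)
          > Ex_nb P' (\<lambda>\<theta> d. if k \<le> d then 1 else 0))"

text \<open>The degree marginal of P is a mean-preserving spread of that of P'
  (convex order: E_P f(d) >= E_P' f(d) for all convex f).\<close>
definition mps_deg :: "(real \<times> nat) measure \<Rightarrow> (real \<times> nat) measure \<Rightarrow> bool" where
  "mps_deg P P' \<longleftrightarrow> (\<forall>f. convex_on UNIV f \<longrightarrow>
      Ex P (\<lambda>\<theta> d. f (real d)) \<ge> Ex P' (\<lambda>\<theta> d. f (real d)))"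

definition strict_mps_deg :: "(real \<times> nat) measure \<Rightarrow> (real \<times> nat) measure \<Rightarrow> bool" where
  "strict_mps_deg P P' \<longleftrightarrow> mps_deg P P' \<and>
     (\<exists>k. measure P {z \<in> space P. snd z = k} \<noteq> measure P' {z \<in> space P'. snd z = k})"

end

theory Submission
  imports Defs
begin

text \<open>Best responses in the friend game are linear: \<open>x(\<theta>, d) = (\<theta> + a d X) / c\<close>, where the
  neighbour average \<open>X\<close> of actions solves \<open>X = (E[\<theta>] + a m X) / c\<close> with \<open>m\<close> the mean
  neighbour degree, so \<open>X = E[\<theta>] / (c - a m)\<close>. Hence \<open>x(\<theta>, d) - x(\<theta>, d') = (d - d') a X / c\<close>,
  and since utility is \<open>(\<theta> + a d X)\<^sup>2 / (2 c)\<close> plus a term independent of the own degree,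
  \<open>U(\<theta>, d) - U(\<theta>, d') = (d - d') (a X / c) (\<theta> + a X (d + d') / 2)\<close>. Both \<open>a X\<close> and
  \<open>a X / c = a E[\<theta>] / (c (c - a m))\<close> grow with \<open>a\<close> and \<open>m\<close> and shrink with \<open>c\<close>.
  First-order dominance of the neighbour degrees raises \<open>m = \<Sum>\<^sub>k P\<^sup>~(d \<ge> k)\<close>; a mean-preserving
  spread raises \<open>m = E[d\<^sup>2] / E[d]\<close> because \<open>d\<^sup>2\<close> is \<open>d\<close> plus a positive combination of the convex
  call payoffs \<open>max 0 (d - s)\<close>, and strictly so because these calls determine the degree
  distribution.\<close>

lemma Dset_bounds: "d \<in> Dset n \<Longrightarrow> 1 \<le> real d \<and> real d \<le> real n"
  by (auto simp: Dset_def)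

lemma real_eq_sum_tails:
  assumes "d \<le> N"
  shows "real d = (\<Sum>k\<in>{1..N}. if k \<le> d then 1 else 0)"
proof -
  have "{k\<in>{1..N}. k \<le> d} = {1..d}" using assms by auto
  thus ?thesis by (simp add: sum.If_cases Int_def conj_commute)
qed

lemma square_eq_sum_calls:
  assumes "d \<le> Suc N"
  shows "real d * real d = real d + 2 * (\<Sum>s\<in>{1..N}. max 0 (real d - real s))"
  using assms
proof (induction d)
  case (Suc d)
  have "(\<Sum>s\<in>{1..N}. max 0 (real (Suc d) - real s))
          = (\<Sum>s\<in>{1..N}. max 0 (real d - real s) + (if s \<le> d then 1 else 0))"
    by (rule sum.cong) auto
  also have "\<dots> = (\<Sum>s\<in>{1..N}. max 0 (real d - real s)) + real d"
    using real_eq_sum_tails[of d N] Suc.prems by (simp add: sum.distrib)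
  finally show ?case using Suc by (simp add: algebra_simps)
qed simp

locale friend_setting =
  fixes n :: nat and \<Theta> :: "real set" and a c :: real and P :: "(real \<times> nat) measure"
  assumes setting: "setting n \<Theta> a c P"
    and compact_types: "compact \<Theta>" and types_nonneg: "\<Theta> \<subseteq> {0..}"
begin

sublocale prob_space P
  using setting by (simp add: setting_def)

lemma a_pos: "a > 0" and c_pos: "c > 0"
  using setting by (simp_all add: setting_def)

lemma sets_P: "sets P = sets (borel \<Otimes>\<^sub>M count_space UNIV)"
  using setting by (simp add: setting_def)

lemma borel_measurable_uncurry:
  assumes "\<And>d. (\<lambda>t. h t d) \<in> borel_measurable borel"
  shows "(\<lambda>z. h (fst z) (snd z)) \<in> borel_measurable P"
  unfolding measurable_cong_sets[OF sets_P refl]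
  by (rule measurable_compose_countable[where f="\<lambda>d z. h (fst z) d"])
    (auto intro: measurable_compose[OF measurable_fst assms])

lemma AE_support: "AE z in P. fst z \<in> \<Theta> \<and> snd z \<in> Dset n"
proof -
  have "\<Theta> \<times> Dset n \<in> sets P"
    unfolding sets_P using compact_types
    by (auto intro!: pair_measureI borel_closed compact_imp_closed)
  moreover have "measure P (\<Theta> \<times> Dset n) = 1"
    using setting by (simp add: setting_def)
  ultimately have "AE z in P. z \<in> \<Theta> \<times> Dset n"
    by (simp add: prob_eq_1)
  thus ?thesis by (auto simp: mem_Times_iff)
qed

lemma integrable_bounded_on_support:
  assumes "\<And>d. (\<lambda>t. h t d) \<in> borel_measurable borel"
    and "\<forall>t\<in>\<Theta>. \<forall>d\<in>Dset n. \<bar>h t d\<bar> \<le> (K :: real)"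
  shows "integrable P (\<lambda>z. h (fst z) (snd z))"
  by (rule integrable_const_bound[where B=K])
    (use AE_support assms borel_measurable_uncurry in \<open>auto elim!: AE_mp\<close>)

lemma Ex_cong_support:
  assumes "(\<lambda>z. h (fst z) (snd z)) \<in> borel_measurable P"
    and "(\<lambda>z. g (fst z) (snd z)) \<in> borel_measurable P"
    and "\<forall>t\<in>\<Theta>. \<forall>d\<in>Dset n. h t d = g t d"
  shows "Ex P h = Ex P g"
  unfolding Ex_def
  by (rule integral_cong_AE) (use assms AE_support in \<open>auto elim!: AE_mp\<close>)

lemma types_bounded: obtains B where "\<forall>t\<in>\<Theta>. \<bar>t\<bar> \<le> B"
  using compact_imp_bounded[OF compact_types] by (auto simp: bounded_iff)

lemma integrable_degree_fun: "integrable P (\<lambda>z. f (snd z) :: real)"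
proof -
  have "\<forall>t\<in>\<Theta>. \<forall>d\<in>Dset n. \<bar>f d\<bar> \<le> (\<Sum>k\<in>Dset n. \<bar>f k\<bar>)"
    by (auto simp: Dset_def intro: member_le_sum)
  thus ?thesis using integrable_bounded_on_support[of "\<lambda>t d. f d"] by simp
qed

lemma integrable_type: "integrable P fst"
proof -
  obtain B where "\<forall>t\<in>\<Theta>. \<bar>t\<bar> \<le> B" using types_bounded .
  thus ?thesis using integrable_bounded_on_support[of "\<lambda>t d. t" B] by simp
qed

lemma integrable_degree_times_type: "integrable P (\<lambda>z. real (snd z) * fst z)"
proof -
  obtain B where B: "\<forall>t\<in>\<Theta>. \<bar>t\<bar> \<le> B" using types_bounded .
  have "\<forall>t\<in>\<Theta>. \<forall>d\<in>Dset n. \<bar>real d * t\<bar> \<le> real n * B"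
    using B Dset_bounds by (fastforce simp: abs_mult intro: mult_mono)
  thus ?thesis using integrable_bounded_on_support[of "\<lambda>t d. real d * t"] by simp
qed

lemma Ex_degree_ge_1: "Ex P (\<lambda>t d. real d) \<ge> 1"
proof -
  have "(\<integral>z. 1 \<partial>P) \<le> (\<integral>z. real (snd z) \<partial>P)"
    by (rule integral_mono_AE)
      (use integrable_degree_fun AE_support Dset_bounds in \<open>auto elim!: AE_mp\<close>)
  thus ?thesis by (simp add: Ex_def prob_space)
qed

definition nb_degree :: real where
  "nb_degree = Ex_nb P (\<lambda>t d. real d)"

definition mean_type :: real where
  "mean_type = Ex P (\<lambda>t d. t)"

text \<open>The equilibrium value of the neighbour average \<open>X\<close> of actions, solving
  \<open>X = (mean_type + a * nb_degree * X) / c\<close>.\<close>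
definition nb_action :: real where
  "nb_action = mean_type / (c - a * nb_degree)"

definition equilibrium :: "real \<Rightarrow> nat \<Rightarrow> real" where
  "equilibrium t d = (if t \<in> \<Theta> \<and> d \<in> Dset n then (t + a * real d * nb_action) / c else 0)"

lemma nb_degree_nonneg: "nb_degree \<ge> 0"
  using Ex_degree_ge_1 unfolding nb_degree_def Ex_nb_def Ex_def
  by (intro divide_nonneg_nonneg integral_nonneg_AE AE_I2) auto

lemma a_nb_degree_less: "a * nb_degree < c"
  using setting by (simp add: setting_def nb_degree_def)

lemma Ex_nb_type: "Ex_nb P (\<lambda>t d. t) = mean_type"
  using setting by (simp add: setting_def mean_type_def)

lemma mean_type_nonneg: "mean_type \<ge> 0"
  unfolding mean_type_def Ex_def
  by (rule integral_nonneg_AE) (use AE_support types_nonneg in \<open>auto elim!: AE_mp\<close>)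

lemma nb_action_nonneg: "nb_action \<ge> 0"
  using mean_type_nonneg a_nb_degree_less by (simp add: nb_action_def)

lemma nb_action_pos: "mean_type > 0 \<Longrightarrow> nb_action > 0"
  using a_nb_degree_less by (simp add: nb_action_def)

lemma nb_action_fixed_point: "(mean_type + a * nb_action * nb_degree) / c = nb_action"
  using a_nb_degree_less c_pos by (simp add: nb_action_def field_simps)

lemma Ex_nb_affine:
  assumes "(\<lambda>z. x (fst z) (snd z)) \<in> borel_measurable P"
    and "\<forall>t\<in>\<Theta>. \<forall>d\<in>Dset n. x t d = (t + a * real d * Y) / c"
  shows "Ex_nb P x = (mean_type + a * Y * nb_degree) / c"
proof -
  have "(\<lambda>z. real (snd z) * x (fst z) (snd z)) \<in> borel_measurable P"
    using borel_measurable_uncurry[of "\<lambda>t d. real d"] assms(1) by measurable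
  moreover have "(\<lambda>z. (real (snd z) * fst z + a * Y * (real (snd z) * real (snd z))) / c)
                   \<in> borel_measurable P"
    by (rule borel_measurable_uncurry) simp
  ultimately have "Ex P (\<lambda>t d. real d * x t d)
                     = Ex P (\<lambda>t d. (real d * t + a * Y * (real d * real d)) / c)"
    by (rule Ex_cong_support) (use assms(2) in \<open>auto simp: field_simps\<close>)
  also have "\<dots> = (Ex P (\<lambda>t d. real d * t) + a * Y * Ex P (\<lambda>t d. real d * real d)) / c"
    unfolding Ex_def
    using integrable_degree_times_type integrable_degree_fun[of "\<lambda>d. real d * real d"] by simp
  finally show ?thesis
    using Ex_degree_ge_1 Ex_nb_type
    unfolding Ex_nb_def nb_degree_def by (simp add: field_simps)
qed

lemma EU_friend_completed_square:
  "EU_friend n \<phi> a c P y t d x =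
     (t + a * real d * Ex_nb P x)\<^sup>2 / (2 * c) - c / 2 * (y - (t + a * real d * Ex_nb P x) / c)\<^sup>2
     + \<phi> * (real n - 1) * Ex P x"
  using c_pos unfolding EU_friend_def by (simp add: field_simps power2_eq_square)

lemma strategy_equilibrium: "strategy n \<Theta> P equilibrium"
  unfolding strategy_def
proof (intro conjI)
  show "(\<lambda>z. equilibrium (fst z) (snd z)) \<in> borel_measurable P"
  proof (rule borel_measurable_uncurry)
    have "\<Theta> \<in> sets borel" using compact_types by (simp add: borel_closed compact_imp_closed)
    thus "(\<lambda>t. equilibrium t d) \<in> borel_measurable borel" for d
      unfolding equilibrium_def by (cases "d \<in> Dset n") (auto intro!: measurable_If_set)
  qed
  obtain B where B: "\<forall>t\<in>\<Theta>. \<bar>t\<bar> \<le> B" using types_bounded .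
  show "\<exists>K. \<forall>t\<in>\<Theta>. \<forall>d\<in>Dset n. equilibrium t d \<le> K"
  proof (intro exI ballI)
    fix t d assume td: "t \<in> \<Theta>" "d \<in> Dset n"
    have "t + a * real d * nb_action \<le> B + a * real n * nb_action"
      using B td Dset_bounds[OF td(2)] a_pos nb_action_nonneg
      by (auto intro!: add_mono mult_left_mono mult_right_mono)
    thus "equilibrium t d \<le> (B + a * real n * nb_action) / c"
      using td c_pos by (simp add: equilibrium_def divide_right_mono)
  qed
  show "\<forall>t\<in>\<Theta>. \<forall>d\<in>Dset n. 0 \<le> equilibrium t d"
    using types_nonneg nb_action_nonneg a_pos c_pos by (auto simp: equilibrium_def)
  show "\<forall>t d. (t, d) \<notin> \<Theta> \<times> Dset n \<longrightarrow> equilibrium t d = 0"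
    by (simp add: equilibrium_def)
qed

lemma Ex_nb_equilibrium: "Ex_nb P equilibrium = nb_action"
  using Ex_nb_affine[of equilibrium nb_action] strategy_equilibrium nb_action_fixed_point
  by (simp add: strategy_def equilibrium_def)

lemma is_friend_eq_equilibrium: "is_friend_eq n \<Theta> \<phi> a c P equilibrium"
  unfolding is_friend_eq_def EU_friend_completed_square Ex_nb_equilibrium
  using strategy_equilibrium c_pos by (simp add: equilibrium_def)

text \<open>The payoff is a concave quadratic in the own action whose unconstrained maximiser is
  nonnegative, so every equilibrium plays it; its neighbour average then solves the fixed-point
  equation defining \<open>nb_action\<close>.\<close>
lemma is_friend_eq_imp_equilibrium:
  assumes eq: "is_friend_eq n \<Theta> \<phi> a c P x"
  shows "x = equilibrium"
proof -
  have st: "strategy n \<Theta> P x" using eq by (simp add: is_friend_eq_def)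
  define Y where "Y = Ex_nb P x"
  have "x t d \<ge> 0" for t d
    using st unfolding strategy_def by (cases "t \<in> \<Theta> \<and> d \<in> Dset n") auto
  hence Y_nonneg: "Y \<ge> 0" unfolding Y_def Ex_nb_def Ex_def
    by (intro divide_nonneg_nonneg integral_nonneg_AE AE_I2) auto
  have best_response: "\<forall>t\<in>\<Theta>. \<forall>d\<in>Dset n. x t d = (t + a * real d * Y) / c"
  proof (intro ballI)
    fix t d assume td: "t \<in> \<Theta>" "d \<in> Dset n"
    let ?v = "(t + a * real d * Y) / c"
    have "?v \<ge> 0" using types_nonneg td a_pos c_pos Y_nonneg by auto
    hence "EU_friend n \<phi> a c P ?v t d x \<le> EU_friend n \<phi> a c P (x t d) t d x"
      using eq td unfolding is_friend_eq_def by blast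
    hence "c / 2 * (x t d - ?v)\<^sup>2 \<le> 0" unfolding EU_friend_completed_square Y_def by simp
    thus "x t d = ?v" using c_pos by (simp add: mult_le_0_iff)
  qed
  have "Y = (mean_type + a * Y * nb_degree) / c"
    using Ex_nb_affine[OF _ best_response] st unfolding Y_def strategy_def by simp
  hence "Y = nb_action"
    using c_pos a_nb_degree_less by (simp add: nb_action_def field_simps)
  with best_response st show "x = equilibrium"
    unfolding strategy_def equilibrium_def by (intro ext) (auto simp: mem_Times_iff)
qed

lemma x_friend_equilibrium: "x_friend n \<Theta> \<phi> a c P = equilibrium"
  unfolding x_friend_def
  using is_friend_eq_equilibrium is_friend_eq_imp_equilibrium by (rule the_equality)

lemma x_friend_diff:
  assumes "t \<in> \<Theta>" "d \<in> Dset n" "d' \<in> Dset n"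
  shows "x_friend n \<Theta> \<phi> a c P t d - x_friend n \<Theta> \<phi> a c P t d'
           = (real d - real d') * (a * nb_action / c)"
  using assms c_pos by (simp add: x_friend_equilibrium equilibrium_def field_simps)

lemma U_friend_diff:
  assumes "t \<in> \<Theta>" "d \<in> Dset n" "d' \<in> Dset n"
  shows "U_friend n \<Theta> \<phi> a c P t d - U_friend n \<Theta> \<phi> a c P t d'
           = (real d - real d') * (a * nb_action / c) * (t + (real d + real d') / 2 * (a * nb_action))"
  using assms c_pos
  by (simp add: U_friend_def EU_friend_completed_square x_friend_equilibrium Ex_nb_equilibrium
      equilibrium_def field_simps power2_eq_square)

lemma mean_type_distr: "mean_type = (\<integral>u. u \<partial>distr P borel fst)"
  unfolding mean_type_def Ex_def
  by (subst integral_distr) (use borel_measurable_uncurry[of "\<lambda>t d. t"] in auto)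

lemma mean_type_pos:
  assumes "measure P {z \<in> space P. fst z > 0} > 0"
  shows "mean_type > 0"
proof -
  have nonneg: "AE z in P. 0 \<le> fst z"
    using AE_support types_nonneg by (auto elim!: AE_mp)
  have "{z \<in> space P. fst z > 0} \<in> sets P"
    using borel_measurable_uncurry[of "\<lambda>t d. t"] by measurable
  moreover have "measure P {z \<in> space P. fst z > 0} = 0" if "AE z in P. fst z = 0"
  proof -
    from that have "AE z in P. z \<notin> {z \<in> space P. fst z > 0}" by (auto elim!: AE_mp)
    with \<open>{z \<in> space P. fst z > 0} \<in> sets P\<close> show ?thesis
      by (simp add: AE_iff_null_sets measure_eq_0_null_sets)
  qed
  ultimately have "\<not> (AE z in P. fst z = 0)" using assms by auto
  hence "(\<integral>z. fst z \<partial>P) \<noteq> 0"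
    using integral_nonneg_eq_0_iff_AE[OF integrable_type nonneg] by simp
  thus ?thesis
    using mean_type_nonneg by (simp add: mean_type_def Ex_def)
qed

lemma nb_degree_eq_sum_tails:
  "nb_degree = (\<Sum>k\<in>{1..n-1}. Ex_nb P (\<lambda>t d. if k \<le> d then 1 else 0))"
proof -
  have "Ex P (\<lambda>t d. real d * real d)
          = Ex P (\<lambda>t d. \<Sum>k\<in>{1..n-1}. real d * (if k \<le> d then 1 else 0))"
  proof (rule Ex_cong_support)
    show "\<forall>t\<in>\<Theta>. \<forall>d\<in>Dset n. real d * real d = (\<Sum>k\<in>{1..n-1}. real d * (if k \<le> d then 1 else 0))"
      using real_eq_sum_tails[of _ "n - 1"] by (simp add: Dset_def sum_distrib_left[symmetric])
  qed (auto intro!: borel_measurable_uncurry)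
  also have "\<dots> = (\<Sum>k\<in>{1..n-1}. Ex P (\<lambda>t d. real d * (if k \<le> d then 1 else 0)))"
    unfolding Ex_def
    using integrable_degree_fun[of "\<lambda>d. real d * (if _ \<le> d then 1 else 0)"]
    by (simp add: integral_sum)
  finally show ?thesis
    unfolding nb_degree_def Ex_nb_def by (simp add: sum_divide_distrib)
qed

lemma Ex_nb_tail_0: "Ex_nb P (\<lambda>t d. if 0 \<le> d then 1 else 0) = 1"
  using Ex_degree_ge_1 by (simp add: Ex_nb_def)

lemma Ex_nb_tail_beyond:
  assumes "k \<ge> n"
  shows "Ex_nb P (\<lambda>t d. if k \<le> d then 1 else 0) = 0"
proof -
  have "Ex P (\<lambda>t d. real d * (if k \<le> d then 1 else 0)) = Ex P (\<lambda>t d. 0)"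
    by (rule Ex_cong_support) (use assms in \<open>auto intro!: borel_measurable_uncurry simp: Dset_def\<close>)
  thus ?thesis by (simp add: Ex_nb_def Ex_def)
qed

lemma Ex_square_degree:
  "Ex P (\<lambda>t d. real d * real d)
     = Ex P (\<lambda>t d. real d) + 2 * (\<Sum>s\<in>{1..n-1}. Ex P (\<lambda>t d. max 0 (real d - real s)))"
proof -
  have "Ex P (\<lambda>t d. real d * real d)
          = Ex P (\<lambda>t d. real d + 2 * (\<Sum>s\<in>{1..n-1}. max 0 (real d - real s)))"
  proof (rule Ex_cong_support)
    show "\<forall>t\<in>\<Theta>. \<forall>d\<in>Dset n.
            real d * real d = real d + 2 * (\<Sum>s\<in>{1..n-1}. max 0 (real d - real s))"
      using square_eq_sum_calls[of _ "n - 1"] by (simp add: Dset_def)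
  qed (auto intro!: borel_measurable_uncurry)
  also have "\<dots> = Ex P (\<lambda>t d. real d) + 2 * (\<Sum>s\<in>{1..n-1}. Ex P (\<lambda>t d. max 0 (real d - real s)))"
    unfolding Ex_def by (simp add: integral_sum integrable_degree_fun)
  finally show ?thesis .
qed

lemma Ex_call_below:
  assumes "s \<le> 1"
  shows "Ex P (\<lambda>t d. max 0 (real d - s)) = Ex P (\<lambda>t d. real d) - s"
proof -
  have "Ex P (\<lambda>t d. max 0 (real d - s)) = Ex P (\<lambda>t d. real d - s)"
    by (rule Ex_cong_support) (use assms in \<open>auto intro!: borel_measurable_uncurry simp: Dset_def\<close>)
  thus ?thesis unfolding Ex_def by (simp add: integrable_degree_fun prob_space)
qed

lemma Ex_call_above:
  assumes "s \<ge> real n - 1"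
  shows "Ex P (\<lambda>t d. max 0 (real d - s)) = 0"
proof -
  have "Ex P (\<lambda>t d. max 0 (real d - s)) = Ex P (\<lambda>t d. 0)"
    by (rule Ex_cong_support) (use assms in \<open>auto intro!: borel_measurable_uncurry simp: Dset_def\<close>)
  thus ?thesis by (simp add: Ex_def)
qed

text \<open>The indicator of \<open>{k}\<close> on the integers is the second difference of the call payoff
  \<open>s \<mapsto> max 0 (d - s)\<close> at \<open>k\<close>.\<close>
lemma prob_degree_eq_call_second_diff:
  "measure P {z \<in> space P. snd z = k}
     = Ex P (\<lambda>t d. max 0 (real d - (real k - 1))) - 2 * Ex P (\<lambda>t d. max 0 (real d - real k))
       + Ex P (\<lambda>t d. max 0 (real d - (real k + 1)))"
proof -
  have indicator: "(if d = k then 1 else 0)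
      = max 0 (real d - (real k - 1)) - 2 * max 0 (real d - real k) + max 0 (real d - (real k + 1))"
    for d :: nat
    by (cases "d < k"; cases "d = k") auto
  have "measure P {z \<in> space P. snd z = k} = (\<integral>z. indicator {z. snd z = k} z \<partial>P)"
    by (simp add: Int_def conj_commute)
  also have "\<dots> = (\<integral>z. max 0 (real (snd z) - (real k - 1)) - 2 * max 0 (real (snd z) - real k)
                     + max 0 (real (snd z) - (real k + 1)) \<partial>P)"
    by (rule Bochner_Integration.integral_cong[OF refl]) (simp add: indicator_def indicator[symmetric])
  finally show ?thesis
    unfolding Ex_def by (simp add: integrable_degree_fun)
qed

end

lemma equilibrium_slope_comparison:
  fixes a c m a' c' m' T :: real
  assumes "0 < a'" "a' \<le> a" "0 < c" "c \<le> c'" "0 \<le> m'" "m' \<le> m" "a * m < c" "a' * m' < c'"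
    and "0 < T" and strict: "a' < a \<or> c < c' \<or> m' < m"
  shows "a' * (T / (c' - a' * m')) \<le> a * (T / (c - a * m))"
    and "a' * (T / (c' - a' * m')) / c' < a * (T / (c - a * m)) / c"
proof -
  have "a' * m' \<le> a * m"
    using assms by (intro mult_mono) auto
  hence gap: "0 < c - a * m" "c - a * m \<le> c' - a' * m'"
    using assms by linarith+
  have num: "a' * T \<le> a * T"
    using assms by simp
  show "a' * (T / (c' - a' * m')) \<le> a * (T / (c - a * m))"
    using frac_le[OF _ num gap] assms by simp
  have den: "c * (c - a * m) \<le> c' * (c' - a' * m')"
    using gap assms by (intro mult_mono) auto
  have "a' * T / (c' * (c' - a' * m')) < a * T / (c * (c - a * m))"
  proof (cases "a' < a")
    case True
    thus ?thesis using frac_less[OF _ _ _ den] gap assms by simp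
  next
    case False
    hence "a' = a" using assms by simp
    have "c - a * m < c' - a' * m' \<or> c < c'"
    proof (cases "m' < m")
      case True
      hence "a * m' < a * m" using assms by simp
      thus ?thesis using \<open>a' = a\<close> assms by auto
    qed (use strict False in auto)
    hence den_strict: "c * (c - a * m) < c' * (c' - a' * m')"
    proof
      assume "c - a * m < c' - a' * m'"
      hence "c * (c - a * m) < c * (c' - a' * m')" using assms by simp
      also have "\<dots> \<le> c' * (c' - a' * m')" using gap assms by (intro mult_right_mono) auto
      finally show ?thesis .
    next
      assume "c < c'"
      hence "c * (c - a * m) < c' * (c - a * m)" using gap by simp
      also have "\<dots> \<le> c' * (c' - a' * m')" using gap assms by (intro mult_left_mono) auto
      finally show ?thesis .
    qed
    thus ?thesis using frac_less2[OF _ num _ den_strict] gap assms by simp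
  qed
  thus "a' * (T / (c' - a' * m')) / c' < a * (T / (c - a * m)) / c"
    by (simp add: field_simps)
qed

lemma convex_on_call: "convex_on UNIV (\<lambda>x::real. max 0 (x - s))"
proof (rule convex_onI)
  fix t x y :: real assume t: "0 < t" "t < 1"
  have "(1 - t) * (x - s) \<le> (1 - t) * max 0 (x - s)" "t * (y - s) \<le> t * max 0 (y - s)"
    "0 \<le> (1 - t) * max 0 (x - s) + t * max 0 (y - s)"
    using t by (simp_all add: mult_left_mono)
  moreover have "(1 - t) * x + t * y - s = (1 - t) * (x - s) + t * (y - s)"
    by (simp add: algebra_simps)
  ultimately show "max 0 ((1 - t) *\<^sub>R x + t *\<^sub>R y - s) \<le> (1 - t) * max 0 (x - s) + t * max 0 (y - s)"
    unfolding real_scaleR_def max.bounded_iff by linarith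
qed simp

locale friend_setting_pair =
  F: friend_setting n \<Theta> a c P + F': friend_setting n \<Theta> a' c' P'
  for n \<Theta> a c P a' c' P'
begin

lemma mps_deg_mean_eq:
  assumes "mps_deg P P'"
  shows "Ex P (\<lambda>t d. real d) = Ex P' (\<lambda>t d. real d)"
proof -
  have "convex_on UNIV (\<lambda>x::real. x)" "convex_on UNIV (\<lambda>x::real. - x)"
    by (simp add: convex_on_ident) (rule convex_onI, simp_all add: algebra_simps)
  with assms have "Ex P' (\<lambda>t d. real d) \<le> Ex P (\<lambda>t d. real d)"
    and "Ex P' (\<lambda>t d. - real d) \<le> Ex P (\<lambda>t d. - real d)"
    unfolding mps_deg_def by fastforce+
  thus ?thesis by (simp add: Ex_def)
qed

lemma mps_deg_call_mono:
  assumes "mps_deg P P'"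
  shows "Ex P' (\<lambda>t d. max 0 (real d - s)) \<le> Ex P (\<lambda>t d. max 0 (real d - s))"
  using assms convex_on_call[of s] unfolding mps_deg_def by blast

lemma nb_degree_mono:
  assumes "fosd_nb P P' \<or> mps_deg P P'"
  shows "F'.nb_degree \<le> F.nb_degree"
  using assms
proof
  assume "fosd_nb P P'"
  thus ?thesis
    unfolding F.nb_degree_eq_sum_tails F'.nb_degree_eq_sum_tails
    by (intro sum_mono) (simp add: fosd_nb_def)
next
  assume mps: "mps_deg P P'"
  have "Ex P' (\<lambda>t d. real d * real d) \<le> Ex P (\<lambda>t d. real d * real d)"
    unfolding F.Ex_square_degree F'.Ex_square_degree mps_deg_mean_eq[OF mps]
    using mps_deg_call_mono[OF mps] by (simp add: sum_mono)
  thus ?thesis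
    using F'.Ex_degree_ge_1 mps_deg_mean_eq[OF mps]
    by (simp add: F.nb_degree_def F'.nb_degree_def Ex_nb_def divide_right_mono)
qed

text \<open>A mean-preserving spread that leaves \<open>E[d\<^sup>2]\<close> unchanged leaves every call expectation
  \<open>E[max 0 (d - s)]\<close> unchanged, and these determine the degree distribution.\<close>
lemma mps_deg_same_nb_degree_imp_same_degrees:
  assumes mps: "mps_deg P P'" and same: "F.nb_degree = F'.nb_degree"
  shows "measure P {z \<in> space P. snd z = k} = measure P' {z \<in> space P'. snd z = k}"
proof -
  note mean = mps_deg_mean_eq[OF mps]
  have "Ex P (\<lambda>t d. real d * real d) = Ex P' (\<lambda>t d. real d * real d)"
    using same F.Ex_degree_ge_1 mean by (simp add: F.nb_degree_def F'.nb_degree_def Ex_nb_def)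
  hence "(\<Sum>s\<in>{1..n-1}. Ex P (\<lambda>t d. max 0 (real d - real s))
                          - Ex P' (\<lambda>t d. max 0 (real d - real s))) = 0"
    unfolding F.Ex_square_degree F'.Ex_square_degree mean by (simp add: sum_subtractf)
  hence inner: "Ex P (\<lambda>t d. max 0 (real d - real s)) = Ex P' (\<lambda>t d. max 0 (real d - real s))"
    if "s \<in> {1..n-1}" for s
    using that mps_deg_call_mono[OF mps] by (subst (asm) sum_nonneg_eq_0_iff) auto
  have call: "Ex P (\<lambda>t d. max 0 (real d - (real j - 1)))
                = Ex P' (\<lambda>t d. max 0 (real d - (real j - 1)))" for j :: nat
  proof (cases "j \<le> 1")
    case True
    thus ?thesis
      using F.Ex_call_below[of "real j - 1"] F'.Ex_call_below[of "real j - 1"] mean by simp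
  next
    case False
    show ?thesis
    proof (cases "j \<le> n")
      case True
      with False have "j - 1 \<in> {1..n-1}" by auto
      thus ?thesis using inner[of "j - 1"] False by (simp add: of_nat_diff)
    next
      case False
      thus ?thesis
        using F.Ex_call_above[of "real j - 1"] F'.Ex_call_above[of "real j - 1"] by simp
    qed
  qed
  show ?thesis
    unfolding F.prob_degree_eq_call_second_diff F'.prob_degree_eq_call_second_diff
    using call[of k] call[of "Suc k"] call[of "Suc (Suc k)"] by (simp add: add.commute)
qed

lemma nb_degree_strict_mono:
  assumes "strict_fosd_nb P P' \<or> strict_mps_deg P P'"
  shows "F'.nb_degree < F.nb_degree"
  using assms
proof
  assume "strict_fosd_nb P P'"
  then obtain k where fosd: "fosd_nb P P'"
    and k: "Ex_nb P (\<lambda>t d. if k \<le> d then 1 else 0) > Ex_nb P' (\<lambda>t d. if k \<le> d then 1 else 0)"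
    by (auto simp: strict_fosd_nb_def)
  have "k \<noteq> 0" using k F.Ex_nb_tail_0 F'.Ex_nb_tail_0 by (cases k) auto
  moreover have "\<not> n \<le> k" using k F.Ex_nb_tail_beyond[of k] F'.Ex_nb_tail_beyond[of k] by auto
  ultimately have "k \<in> {1..n-1}" by auto
  thus ?thesis
    unfolding F.nb_degree_eq_sum_tails F'.nb_degree_eq_sum_tails
    by (intro sum_strict_mono_ex1) (use fosd k in \<open>auto simp: fosd_nb_def\<close>)
next
  assume "strict_mps_deg P P'"
  thus ?thesis
    using nb_degree_mono mps_deg_same_nb_degree_imp_same_degrees
    unfolding strict_mps_deg_def by force
qed

end

theorem proposition8:
  fixes n :: nat and \<phi> a c a' c' :: real and \<Theta> :: "real set"
    and P P' :: "(real \<times> nat) measure"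
  assumes n: "n \<ge> 2"
    and \<Theta>: "compact \<Theta>" "\<Theta> \<subseteq> {0..}"
    and S: "setting n \<Theta> a c P" and S': "setting n \<Theta> a' c' P'"
    and types_eq: "distr P borel fst = distr P' borel fst"
    and pos: "measure P {z \<in> space P. fst z > 0} > 0"
    and aa: "a \<ge> a'" and cc: "c \<le> c'"
    and dist: "fosd_nb P P' \<or> mps_deg P P'"
    and strict: "a > a' \<or> c < c' \<or> strict_fosd_nb P P' \<or> strict_mps_deg P P'"
  shows "\<forall>\<theta>i\<in>\<Theta>. \<forall>di\<in>Dset n. \<forall>di'\<in>Dset n. di > di' \<longrightarrow>
     (x_friend n \<Theta> \<phi> a c P \<theta>i di - x_friend n \<Theta> \<phi> a c P \<theta>i di'
        > x_friend n \<Theta> \<phi> a' c' P' \<theta>i di - x_friend n \<Theta> \<phi> a' c' P' \<theta>i di') \<and>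
     (U_friend n \<Theta> \<phi> a c P \<theta>i di - U_friend n \<Theta> \<phi> a c P \<theta>i di'
        > U_friend n \<Theta> \<phi> a' c' P' \<theta>i di - U_friend n \<Theta> \<phi> a' c' P' \<theta>i di')"
proof (intro ballI impI conjI)
  interpret friend_setting_pair n \<Theta> a c P a' c' P'
    using S S' \<Theta> by unfold_locales
  have "F'.mean_type = F.mean_type"
    using F.mean_type_distr F'.mean_type_distr types_eq by simp
  hence nb_actions: "a' * F'.nb_action \<le> a * F.nb_action"
    and slopes: "a' * F'.nb_action / c' < a * F.nb_action / c"
    using equilibrium_slope_comparison[OF F'.a_pos aa F.c_pos cc F'.nb_degree_nonneg
        nb_degree_mono[OF dist] F.a_nb_degree_less F'.a_nb_degree_less F.mean_type_pos[OF pos]]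
      strict nb_degree_strict_mono
    unfolding F.nb_action_def F'.nb_action_def by auto
  have "a' * F'.nb_action > 0"
    using F'.a_pos F'.nb_action_pos F.mean_type_pos[OF pos] \<open>F'.mean_type = F.mean_type\<close> by simp
  fix t d d' assume t: "t \<in> \<Theta>" and d: "d \<in> Dset n" "d' \<in> Dset n" and "d' < d"
  hence "real d - real d' > 0" "(real d + real d') / 2 > 0" and "t \<ge> 0"
    using \<Theta>(2) by auto
  show "x_friend n \<Theta> \<phi> a c P t d - x_friend n \<Theta> \<phi> a c P t d'
          > x_friend n \<Theta> \<phi> a' c' P' t d - x_friend n \<Theta> \<phi> a' c' P' t d'"
    unfolding F.x_friend_diff[OF t d] F'.x_friend_diff[OF t d]
    using slopes \<open>real d - real d' > 0\<close> by (rule mult_strict_left_mono)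
  have "a' * F'.nb_action / c' * (t + (real d + real d') / 2 * (a' * F'.nb_action))
          < a * F.nb_action / c * (t + (real d + real d') / 2 * (a' * F'.nb_action))"
    using slopes \<open>a' * F'.nb_action > 0\<close> \<open>t \<ge> 0\<close> \<open>(real d + real d') / 2 > 0\<close>
    by (intro mult_strict_right_mono) (auto intro: add_nonneg_pos)
  also have "\<dots> \<le> a * F.nb_action / c * (t + (real d + real d') / 2 * (a * F.nb_action))"
    using nb_actions \<open>a' * F'.nb_action > 0\<close> \<open>(real d + real d') / 2 > 0\<close> F.c_pos
    by (intro mult_left_mono add_left_mono) auto
  finally show "U_friend n \<Theta> \<phi> a c P t d - U_friend n \<Theta> \<phi> a c P t d'
          > U_friend n \<Theta> \<phi> a' c' P' t d - U_friend n \<Theta> \<phi> a' c' P' t d'"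
    unfolding F.U_friend_diff[OF t d] F'.U_friend_diff[OF t d] mult.assoc
    using \<open>real d - real d' > 0\<close> by (rule mult_strict_left_mono)
qed

end
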